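(* Let $n,p\ge1$ and let $\alpha\in\widehat F_{(n,p)}$ be homogeneous of fine degree $\underline{k}$. Assume that each line and each column of $\mathrm{supp}(\underline{k})$ is nonempty. Then $\alpha=0$ unless $\mathrm{supp}(\underline{k})$ satisfies: for all proper subsets $S_1\subset\{1,\dots,n\}$, $S_2\subset\{1,\dots,p\}$ (nonempty with nonempty complements $\bar S_1,\bar S_2$), $\mathrm{supp}(\underline{k})\not\subset(S_1\times S_2)\cup(\bar S_1\times\bar S_2)$.
   Context: Work over a field of characteristic $0$. $F_{(n,p)}$ is the Lie algebra generated by $x_{i,j}$, $(i,j)\in\{1,\dots,n\}\times\{1,\dots,p\}$, with defining relations $[x_{i,j},x_{i',j'}]=0$ whenever $i\ne i'$ and $j\ne j'$; it is graded by the fine degree in $\bigoplus_{(i,j)}\mathbb{N}\epsilon_{(i,j)}$ ($\deg x_{i,j}=\epsilon_{(i,j)}$) and by total degree ($\deg x_{i,j}=1$), and $\widehat F_{(n,p)}$ is its completion for the total degree. For $\underline{k}=\sum k_{(i,j)}\epsilon_{(i,j)}$, $\mathrm{supp}(\underline{k})=\{(i,j)\mid k_{(i,j)}\ne0\}$; the $i$-th column of a set $S$ is $S\cap(\{i\}\times\{1,\dots,p\})$ and the $j$-th line is $S\cap(\{1,\dots,n\}\times\{j\})$. *)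

theory Defs
  imports Main
begin

text \<open>Noncommutative (formal) series over the alphabet of index pairs: words are lists of
  letters (i,j), a series is a coefficient function on words. Elements of the free associative
  algebra are those of finite support; everything below lives there.\<close>

type_synonym 'a nc_series = "(nat \<times> nat) list \<Rightarrow> 'a"

definition nc_mul :: "'a::field nc_series \<Rightarrow> 'a nc_series \<Rightarrow> 'a nc_series" where
  "nc_mul f g = (\<lambda>w. \<Sum>k\<le>length w. f (take k w) * g (drop k w))"

definition nc_br :: "'a::field nc_series \<Rightarrow> 'a nc_series \<Rightarrow> 'a nc_series" where
  "nc_br f g = (\<lambda>w. nc_mul f g w - nc_mul g f w)"

definition gen :: "nat \<Rightarrow> nat \<Rightarrow> 'a::field nc_series" where
  "gen i j = (\<lambda>w. if w = [(i,j)] then 1 else 0)"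

text \<open>The free Lie algebra on the x_{i,j}, realised as the Lie subalgebra of the free
  associative algebra generated by the letters.\<close>
inductive_set free_lie :: "nat \<Rightarrow> nat \<Rightarrow> 'a::field nc_series set"
  for n p :: nat where
  fl_gen: "\<lbrakk>i \<in> {1..n}; j \<in> {1..p}\<rbrakk> \<Longrightarrow> gen i j \<in> free_lie n p"
| fl_zero: "(\<lambda>_. 0) \<in> free_lie n p"
| fl_add: "\<lbrakk>f \<in> free_lie n p; g \<in> free_lie n p\<rbrakk> \<Longrightarrow> (\<lambda>w. f w + g w) \<in> free_lie n p"
| fl_smult: "f \<in> free_lie n p \<Longrightarrow> (\<lambda>w. c * f w) \<in> free_lie n p"
| fl_br: "\<lbrakk>f \<in> free_lie n p; g \<in> free_lie n p\<rbrakk> \<Longrightarrow> nc_br f g \<in> free_lie n p"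

text \<open>The Lie ideal of the free Lie algebra generated by the defining relations of F_(n,p);
  F_(n,p) is the quotient free_lie n p / rel_ideal n p.\<close>
inductive_set rel_ideal :: "nat \<Rightarrow> nat \<Rightarrow> 'a::field nc_series set"
  for n p :: nat where
  ri_rel: "\<lbrakk>i \<in> {1..n}; j \<in> {1..p}; i' \<in> {1..n}; j' \<in> {1..p}; i \<noteq> i'; j \<noteq> j'\<rbrakk>
           \<Longrightarrow> nc_br (gen i j) (gen i' j') \<in> rel_ideal n p"
| ri_zero: "(\<lambda>_. 0) \<in> rel_ideal n p"
| ri_add: "\<lbrakk>f \<in> rel_ideal n p; g \<in> rel_ideal n p\<rbrakk> \<Longrightarrow> (\<lambda>w. f w + g w) \<in> rel_ideal n p"
| ri_smult: "f \<in> rel_ideal n p \<Longrightarrow> (\<lambda>w. c * f w) \<in> rel_ideal n p"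
| ri_brl: "\<lbrakk>l \<in> free_lie n p; f \<in> rel_ideal n p\<rbrakk> \<Longrightarrow> nc_br l f \<in> rel_ideal n p"
| ri_brr: "\<lbrakk>l \<in> free_lie n p; f \<in> rel_ideal n p\<rbrakk> \<Longrightarrow> nc_br f l \<in> rel_ideal n p"

definition fine_homogeneous :: "'a::field nc_series \<Rightarrow> (nat \<times> nat \<Rightarrow> nat) \<Rightarrow> bool" where
  "fine_homogeneous f k \<longleftrightarrow> (\<forall>w. f w \<noteq> 0 \<longrightarrow> (\<forall>a. count_list w a = k a))"

definition fsupp :: "(nat \<times> nat \<Rightarrow> nat) \<Rightarrow> (nat \<times> nat) set" where
  "fsupp k = {a. k a \<noteq> 0}"

end

theory Submission
  imports Defs
begin

text \<open>Put A = supp k \<inter> (S1 \<times> S2) and B = supp k \<inter> (-S1 \<times> -S2). Every letter of A commutes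
  with every letter of B modulo the defining relations, hence modulo rel_ideal each element of the
  free Lie algebra on A \<union> B is the sum of its restrictions to the words over A and to the words
  over B (restriction to the words over a set of letters is an algebra endomorphism). A nonzero
  homogeneous \<alpha> of degree k only involves the letters of supp k, and each of its words involves
  letters of both A and B, so both restrictions of \<alpha> vanish and \<alpha> lies in rel_ideal.\<close>

lemma nc_mul_Nil [simp]: "nc_mul f g [] = f [] * g []"
  by (simp add: nc_mul_def)

lemma nc_mul_Cons: "nc_mul f g (x # w) = f [] * g (x # w) + nc_mul (\<lambda>u. f (x # u)) g w"
  unfolding nc_mul_def by (simp add: sum.atMost_Suc_shift del: sum.atMost_Suc)

lemma nc_mul_add_left [simp]: "nc_mul (\<lambda>u. f u + g u) h w = nc_mul f h w + nc_mul g h w"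
  by (simp add: nc_mul_def algebra_simps sum.distrib)

lemma nc_mul_add_right [simp]: "nc_mul h (\<lambda>u. f u + g u) w = nc_mul h f w + nc_mul h g w"
  by (simp add: nc_mul_def algebra_simps sum.distrib)

lemma nc_mul_diff_left [simp]: "nc_mul (\<lambda>u. f u - g u) h w = nc_mul f h w - nc_mul g h w"
  by (simp add: nc_mul_def algebra_simps sum_subtractf)

lemma nc_mul_diff_right [simp]: "nc_mul h (\<lambda>u. f u - g u) w = nc_mul h f w - nc_mul h g w"
  by (simp add: nc_mul_def algebra_simps sum_subtractf)

lemma nc_mul_smult_left [simp]: "nc_mul (\<lambda>u. c * f u) h w = c * nc_mul f h w"
  by (simp add: nc_mul_def algebra_simps sum_distrib_left)

lemma nc_mul_smult_right [simp]: "nc_mul h (\<lambda>u. c * f u) w = c * nc_mul h f w"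
  by (simp add: nc_mul_def algebra_simps sum_distrib_left)

lemma nc_mul_zero_left [simp]: "nc_mul (\<lambda>_. 0) h w = 0"
  by (simp add: nc_mul_def)

lemma nc_mul_zero_right [simp]: "nc_mul h (\<lambda>_. 0) w = 0"
  by (simp add: nc_mul_def)

lemma nc_mul_assoc: "nc_mul (nc_mul f g) h w = nc_mul f (nc_mul g h) w"
proof (induction w arbitrary: f)
  case Nil
  then show ?case by simp
next
  case (Cons x w)
  have "(\<lambda>u. nc_mul f g (x # u)) = (\<lambda>u. f [] * g (x # u) + nc_mul (\<lambda>u. f (x # u)) g u)"
    by (simp add: nc_mul_Cons)
  then have "nc_mul (nc_mul f g) h (x # w)
      = f [] * g [] * h (x # w) + f [] * nc_mul (\<lambda>u. g (x # u)) h w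
        + nc_mul (\<lambda>u. f (x # u)) (nc_mul g h) w"
    by (simp add: nc_mul_Cons Cons.IH algebra_simps)
  then show ?case
    by (simp add: nc_mul_Cons algebra_simps)
qed

lemma nc_br_antisym: "nc_br g f = (\<lambda>w. - nc_br f g w)"
  by (simp add: nc_br_def)

lemma nc_br_zero_left [simp]: "nc_br (\<lambda>_. 0) g = (\<lambda>_. 0)"
  by (simp add: nc_br_def)

lemma nc_br_add_left: "nc_br (\<lambda>w. f w + g w) h = (\<lambda>w. nc_br f h w + nc_br g h w)"
  by (simp add: nc_br_def algebra_simps)

lemma nc_br_smult_left: "nc_br (\<lambda>w. c * f w) h = (\<lambda>w. c * nc_br f h w)"
  by (simp add: nc_br_def algebra_simps)

lemma nc_br_jacobi: "nc_br (nc_br f g) h = (\<lambda>w. nc_br f (nc_br g h) w - nc_br g (nc_br f h) w)"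
  by (simp add: nc_br_def nc_mul_assoc algebra_simps)

inductive_set free_lie_on :: "(nat \<times> nat) set \<Rightarrow> 'a::field nc_series set" for G where
  gen: "(i, j) \<in> G \<Longrightarrow> gen i j \<in> free_lie_on G"
| zero: "(\<lambda>_. 0) \<in> free_lie_on G"
| add: "\<lbrakk>f \<in> free_lie_on G; g \<in> free_lie_on G\<rbrakk> \<Longrightarrow> (\<lambda>w. f w + g w) \<in> free_lie_on G"
| smult: "f \<in> free_lie_on G \<Longrightarrow> (\<lambda>w. c * f w) \<in> free_lie_on G"
| br: "\<lbrakk>f \<in> free_lie_on G; g \<in> free_lie_on G\<rbrakk> \<Longrightarrow> nc_br f g \<in> free_lie_on G"

lemma free_lie_on_mono:
  assumes "G \<subseteq> H"
  shows "free_lie_on G \<subseteq> free_lie_on H"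
proof
  fix f :: "'a nc_series"
  assume "f \<in> free_lie_on G"
  then show "f \<in> free_lie_on H"
    by (induction rule: free_lie_on.induct) (use assms in \<open>auto intro: free_lie_on.intros\<close>)
qed

lemma free_lie_eq_free_lie_on: "free_lie n p = free_lie_on ({1..n} \<times> {1..p})"
proof (intro equalityI subsetI)
  show "f \<in> free_lie_on ({1..n} \<times> {1..p})" if "f \<in> free_lie n p" for f :: "'a nc_series"
    using that by (induction rule: free_lie.induct) (auto intro: free_lie_on.intros)
  show "f \<in> free_lie n p" if "f \<in> free_lie_on ({1..n} \<times> {1..p})" for f :: "'a nc_series"
    using that by (induction rule: free_lie_on.induct) (auto intro: free_lie.intros)
qed

lemma free_lie_on_subset_free_lie: "G \<subseteq> {1..n} \<times> {1..p} \<Longrightarrow> free_lie_on G \<subseteq> free_lie n p"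
  unfolding free_lie_eq_free_lie_on by (rule free_lie_on_mono)

lemma rel_ideal_uminus: "f \<in> rel_ideal n p \<Longrightarrow> (\<lambda>w. - f w) \<in> rel_ideal n p"
  using ri_smult[of f n p "-1"] by simp

lemma rel_ideal_diff: "f \<in> rel_ideal n p \<Longrightarrow> g \<in> rel_ideal n p \<Longrightarrow> (\<lambda>w. f w - g w) \<in> rel_ideal n p"
  using ri_add[OF _ rel_ideal_uminus[of g]] by simp

lemma rel_ideal_nc_br_swap: "nc_br f g \<in> rel_ideal n p \<Longrightarrow> nc_br g f \<in> rel_ideal n p"
  by (subst nc_br_antisym) (rule rel_ideal_uminus)

lemma nc_br_free_lie_on_rel_ideal:
  assumes G: "G \<subseteq> {1..n} \<times> {1..p}"
    and gen_br: "\<And>i j. (i, j) \<in> G \<Longrightarrow> nc_br (gen i j) h \<in> rel_ideal n p"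
    and f: "f \<in> free_lie_on G"
  shows "nc_br f h \<in> rel_ideal n p"
  using f
proof (induction rule: free_lie_on.induct)
  case (gen i j)
  then show ?case by (rule gen_br)
next
  case zero
  then show ?case by (simp add: ri_zero)
next
  case (add f g)
  then show ?case by (simp add: nc_br_add_left ri_add)
next
  case (smult f c)
  then show ?case by (simp add: nc_br_smult_left ri_smult)
next
  case (br f g)
  have "f \<in> free_lie n p" "g \<in> free_lie n p"
    using br.hyps free_lie_on_subset_free_lie[OF G] by blast+
  with br.IH show ?case
    by (simp add: nc_br_jacobi rel_ideal_diff ri_brl)
qed

lemma nc_br_free_lie_on_commuting:
  fixes a b :: "'a::field nc_series"
  assumes A: "A \<subseteq> {1..n} \<times> {1..p}" and B: "B \<subseteq> {1..n} \<times> {1..p}"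
    and commute: "\<And>i j i' j'. (i, j) \<in> A \<Longrightarrow> (i', j') \<in> B \<Longrightarrow>
      nc_br (gen i j) (gen i' j') \<in> (rel_ideal n p :: 'a nc_series set)"
    and a: "a \<in> free_lie_on A" and b: "b \<in> free_lie_on B"
  shows "nc_br a b \<in> rel_ideal n p"
proof (rule nc_br_free_lie_on_rel_ideal[OF A _ a])
  fix i j assume "(i, j) \<in> A"
  then have "nc_br b (gen i j) \<in> rel_ideal n p"
    by (auto intro!: nc_br_free_lie_on_rel_ideal[OF B _ b] rel_ideal_nc_br_swap[OF commute])
  then show "nc_br (gen i j) b \<in> rel_ideal n p"
    by (rule rel_ideal_nc_br_swap)
qed

definition restrict_letters :: "(nat \<times> nat) set \<Rightarrow> 'a::field nc_series \<Rightarrow> 'a nc_series" where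
  "restrict_letters C f = (\<lambda>w. if set w \<subseteq> C then f w else 0)"

lemma restrict_letters_gen:
  "restrict_letters C (gen i j) = (if (i, j) \<in> C then gen i j else (\<lambda>_. 0))"
  by (auto simp: restrict_letters_def gen_def)

lemma restrict_letters_add:
  "restrict_letters C (\<lambda>w. f w + g w) = (\<lambda>w. restrict_letters C f w + restrict_letters C g w)"
  by (simp add: restrict_letters_def fun_eq_iff)

lemma restrict_letters_smult:
  "restrict_letters C (\<lambda>w. c * f w) = (\<lambda>w. c * restrict_letters C f w)"
  by (simp add: restrict_letters_def fun_eq_iff)

lemma restrict_letters_nc_mul:
  "restrict_letters C (nc_mul f g) = nc_mul (restrict_letters C f) (restrict_letters C g)"
proof (rule ext)
  fix w :: "(nat \<times> nat) list"
  have split: "set w = set (take k w) \<union> set (drop k w)" for k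
    by (metis append_take_drop_id set_append)
  show "restrict_letters C (nc_mul f g) w = nc_mul (restrict_letters C f) (restrict_letters C g) w"
  proof (cases "set w \<subseteq> C")
    case True
    then have "set (take k w) \<subseteq> C \<and> set (drop k w) \<subseteq> C" for k
      using split[of k] by blast
    with True show ?thesis by (simp add: restrict_letters_def nc_mul_def)
  next
    case False
    then have vanish: "restrict_letters C f (take k w) * restrict_letters C g (drop k w) = 0" for k
      using split[of k] unfolding restrict_letters_def by auto
    have "nc_mul (restrict_letters C f) (restrict_letters C g) w = 0"
      unfolding nc_mul_def using vanish by (intro sum.neutral) blast
    with False show ?thesis by (simp add: restrict_letters_def)
  qed
qed

lemma restrict_letters_nc_br:
  "restrict_letters C (nc_br f g) = nc_br (restrict_letters C f) (restrict_letters C g)"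
  by (simp add: nc_br_def fun_eq_iff restrict_letters_nc_mul[symmetric]) (simp add: restrict_letters_def)

lemma restrict_letters_free_lie_on:
  assumes "f \<in> free_lie_on G"
  shows "restrict_letters C f \<in> free_lie_on (G \<inter> C)"
  using assms
proof (induction rule: free_lie_on.induct)
  case (gen i j)
  then show ?case by (simp add: restrict_letters_gen free_lie_on.intros)
next
  case zero
  then show ?case by (simp add: restrict_letters_def free_lie_on.zero)
next
  case (add f g)
  then show ?case by (simp add: restrict_letters_add free_lie_on.add)
next
  case (smult f c)
  then show ?case by (simp add: restrict_letters_smult free_lie_on.smult)
next
  case (br f g)
  then show ?case by (simp add: restrict_letters_nc_br free_lie_on.br)
qed

lemma free_lie_on_Un_decomposition:
  fixes f :: "'a::field nc_series"
  assumes A: "A \<subseteq> {1..n} \<times> {1..p}" and B: "B \<subseteq> {1..n} \<times> {1..p}" and disjoint: "A \<inter> B = {}"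
    and commute: "\<And>i j i' j'. (i, j) \<in> A \<Longrightarrow> (i', j') \<in> B \<Longrightarrow>
      nc_br (gen i j) (gen i' j') \<in> (rel_ideal n p :: 'a nc_series set)"
    and f: "f \<in> free_lie_on (A \<union> B)"
  shows "(\<lambda>w. f w - restrict_letters A f w - restrict_letters B f w) \<in> rel_ideal n p"
  using f
proof (induction rule: free_lie_on.induct)
  case (gen i j)
  then have "(\<lambda>w. gen i j w - restrict_letters A (gen i j) w - restrict_letters B (gen i j) w)
      = (\<lambda>_. 0 :: 'a)"
    using disjoint by (auto simp: restrict_letters_gen)
  then show ?case by (simp only: ri_zero)
next
  case zero
  then show ?case by (simp add: restrict_letters_def ri_zero)
next
  case (add f g)
  have "(\<lambda>w. f w + g w - restrict_letters A (\<lambda>w. f w + g w) w - restrict_letters B (\<lambda>w. f w + g w) w)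
      = (\<lambda>w. (f w - restrict_letters A f w - restrict_letters B f w)
             + (g w - restrict_letters A g w - restrict_letters B g w))"
    by (simp add: restrict_letters_add fun_eq_iff algebra_simps)
  then show ?case using add.IH by (simp only: ri_add)
next
  case (smult f c)
  have "(\<lambda>w. c * f w - restrict_letters A (\<lambda>w. c * f w) w - restrict_letters B (\<lambda>w. c * f w) w)
      = (\<lambda>w. c * (f w - restrict_letters A f w - restrict_letters B f w))"
    by (simp add: restrict_letters_smult fun_eq_iff algebra_simps)
  then show ?case using smult.IH by (simp only: ri_smult)
next
  case (br f g)
  define a where "a = restrict_letters A f"
  define b where "b = restrict_letters B f"
  define a' where "a' = restrict_letters A g"
  define b' where "b' = restrict_letters B g"
  define r where "r = (\<lambda>w. f w - a w - b w)"
  define r' where "r' = (\<lambda>w. g w - a' w - b' w)"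
  have "a \<in> free_lie_on A" "a' \<in> free_lie_on A" "b \<in> free_lie_on B" "b' \<in> free_lie_on B"
    unfolding a_def a'_def b_def b'_def
    using restrict_letters_free_lie_on[OF br.hyps(1)] restrict_letters_free_lie_on[OF br.hyps(2)]
    by (metis Int_absorb1 Un_upper1 Un_upper2)+
  then have "a \<in> free_lie n p" "b \<in> free_lie n p"
      and "nc_br a b' \<in> rel_ideal n p" "nc_br b a' \<in> rel_ideal n p"
    using free_lie_on_subset_free_lie[OF A] free_lie_on_subset_free_lie[OF B]
      nc_br_free_lie_on_commuting[OF A B commute] rel_ideal_nc_br_swap
    by blast+
  moreover have "g \<in> free_lie n p"
    using free_lie_on_subset_free_lie[of "A \<union> B"] A B br.hyps(2) by blast
  moreover have "r \<in> rel_ideal n p" "r' \<in> rel_ideal n p"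
    using br.IH unfolding r_def r'_def a_def b_def a'_def b'_def .
  ultimately have "nc_br a b' \<in> rel_ideal n p" "nc_br b a' \<in> rel_ideal n p"
    and "nc_br a r' \<in> rel_ideal n p" "nc_br b r' \<in> rel_ideal n p" "nc_br r g \<in> rel_ideal n p"
    by (auto intro: ri_brl ri_brr)
  then have "(\<lambda>w. nc_br a b' w + nc_br b a' w + nc_br a r' w + nc_br b r' w + nc_br r g w)
      \<in> rel_ideal n p"
    by (intro ri_add)
  moreover have "(\<lambda>w. nc_br f g w - restrict_letters A (nc_br f g) w - restrict_letters B (nc_br f g) w)
      = (\<lambda>w. nc_br a b' w + nc_br b a' w + nc_br a r' w + nc_br b r' w + nc_br r g w)"
    unfolding restrict_letters_nc_br a_def[symmetric] b_def[symmetric] a'_def[symmetric] b'_def[symmetric]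
    by (simp add: r_def r'_def nc_br_def fun_eq_iff algebra_simps)
  ultimately show ?case by (simp only:)
qed

lemma fine_homogeneous_set_eq_fsupp:
  assumes "fine_homogeneous f k" and "f w \<noteq> 0"
  shows "set w = fsupp k"
proof -
  have "count_list w x = k x" for x
    using assms unfolding fine_homogeneous_def by blast
  then have "x \<in> set w \<longleftrightarrow> k x \<noteq> 0" for x
    using count_list_0_iff[of w x] by simp
  then show ?thesis
    unfolding fsupp_def by blast
qed

lemma fine_homogeneous_restrict_letters_eq:
  assumes "fine_homogeneous f k" and "fsupp k \<subseteq> C"
  shows "restrict_letters C f = f"
  using fine_homogeneous_set_eq_fsupp[OF assms(1)] assms(2)
  by (auto simp: restrict_letters_def fun_eq_iff)

lemma fine_homogeneous_restrict_letters_zero: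
  assumes "fine_homogeneous f k" and "x \<in> fsupp k" and "x \<notin> C"
  shows "restrict_letters C f = (\<lambda>_. 0)"
  using fine_homogeneous_set_eq_fsupp[OF assms(1)] assms(2,3)
  by (auto simp: restrict_letters_def fun_eq_iff)

lemma fine_homogeneous_free_lie_on_fsupp:
  assumes "f \<in> free_lie_on G" and "fine_homogeneous f k"
  shows "f \<in> free_lie_on (G \<inter> fsupp k)"
  using restrict_letters_free_lie_on[OF assms(1), of "fsupp k"]
  by (simp add: fine_homogeneous_restrict_letters_eq[OF assms(2) subset_refl])

lemma fine_homogeneous_rel_ideal_if_meets_both:
  fixes f :: "'a::field nc_series"
  assumes A: "A \<subseteq> {1..n} \<times> {1..p}" and B: "B \<subseteq> {1..n} \<times> {1..p}" and disjoint: "A \<inter> B = {}"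
    and commute: "\<And>i j i' j'. (i, j) \<in> A \<Longrightarrow> (i', j') \<in> B \<Longrightarrow>
      nc_br (gen i j) (gen i' j') \<in> (rel_ideal n p :: 'a nc_series set)"
    and f: "f \<in> free_lie_on (A \<union> B)" and hom: "fine_homogeneous f k"
    and "x \<in> A \<inter> fsupp k" and "y \<in> B \<inter> fsupp k"
  shows "f \<in> rel_ideal n p"
proof -
  have "restrict_letters A f = (\<lambda>_. 0)" "restrict_letters B f = (\<lambda>_. 0)"
    using fine_homogeneous_restrict_letters_zero[OF hom] disjoint assms(7,8) by blast+
  with free_lie_on_Un_decomposition[OF A B disjoint commute f] show ?thesis
    by simp
qed

theorem lemma1p7:
  fixes n p :: nat and k :: "nat \<times> nat \<Rightarrow> nat" and \<alpha> :: "'a::field_char_0 nc_series"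
  assumes "n \<ge> 1" and "p \<ge> 1"
    and "fsupp k \<subseteq> {1..n} \<times> {1..p}"
    and "\<alpha> \<in> free_lie n p"
    and "fine_homogeneous \<alpha> k"
    and "\<forall>i\<in>{1..n}. \<exists>j\<in>{1..p}. (i, j) \<in> fsupp k"
    and "\<forall>j\<in>{1..p}. \<exists>i\<in>{1..n}. (i, j) \<in> fsupp k"
    and "\<not> (\<forall>S1 S2. S1 \<subset> {1..n} \<and> S1 \<noteq> {} \<and> S2 \<subset> {1..p} \<and> S2 \<noteq> {} \<longrightarrow>
            \<not> fsupp k \<subseteq> (S1 \<times> S2) \<union> (({1..n} - S1) \<times> ({1..p} - S2)))"
  shows "\<alpha> \<in> rel_ideal n p"
proof -
  obtain S1 S2 where S1: "S1 \<subset> {1..n}" "S1 \<noteq> {}"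
    and block: "fsupp k \<subseteq> (S1 \<times> S2) \<union> (({1..n} - S1) \<times> ({1..p} - S2))"
    using assms(8) by blast
  define A where "A = fsupp k \<inter> (S1 \<times> S2)"
  define B where "B = fsupp k \<inter> (({1..n} - S1) \<times> ({1..p} - S2))"
  have A: "A \<subseteq> {1..n} \<times> {1..p}" and B: "B \<subseteq> {1..n} \<times> {1..p}" and disjoint: "A \<inter> B = {}"
    using assms(3) by (auto simp: A_def B_def)
  have commute: "nc_br (gen i j) (gen i' j') \<in> (rel_ideal n p :: 'a nc_series set)"
    if "(i, j) \<in> A" "(i', j') \<in> B" for i j i' j'
    using that A B by (intro ri_rel) (auto simp: A_def B_def)
  have "{1..n} \<times> {1..p} \<inter> fsupp k \<subseteq> A \<union> B"
    using block by (auto simp: A_def B_def)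
  then have \<alpha>: "\<alpha> \<in> free_lie_on (A \<union> B)"
    using fine_homogeneous_free_lie_on_fsupp[OF assms(4)[unfolded free_lie_eq_free_lie_on] assms(5)]
      free_lie_on_mono by blast
  obtain i j where "i \<in> S1" "(i, j) \<in> fsupp k"
    using S1 assms(6) by blast
  then have x: "(i, j) \<in> A \<inter> fsupp k"
    using block by (auto simp: A_def)
  obtain i' j' where "i' \<in> {1..n} - S1" "(i', j') \<in> fsupp k"
    using S1 assms(6) by blast
  then have y: "(i', j') \<in> B \<inter> fsupp k"
    using block by (auto simp: B_def)
  show ?thesis
    by (rule fine_homogeneous_rel_ideal_if_meets_both[OF A B disjoint commute \<alpha> assms(5) x y])
qed

end
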